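(* Let $t$ be a positive integer, let $M$ be a $t$-spike of order $r$ with associated partition $(A_1,\ldots,A_r)$, and let $C$ be a circuit of $M$. Then either (1) $C = \bigcup_{j \in J}A_j$ for some $t$-element set $J \subseteq \{1,\dots,r\}$, or (2) $\left|\{i \in \{1,\dots,r\} : A_i \cap C \neq \emptyset\}\right| \ge r-(t-2)$ and $\left|\{i \in \{1,\dots,r\} : A_i \subseteq C\}\right| < t$.
   Context: For a positive integer $t$, a matroid $M$ is a $t$-spike of order $r$ (where $r\ge t$) if there is a partition $(A_1,\ldots,A_r)$ of $E(M)$ into 2-element sets, called the associated partition, such that, for every $t$-element subset $J\subseteq\{1,\dots,r\}$, the set $\bigcup_{j\in J}A_j$ is both a circuit and a cocircuit of $M$. *)

theory Defs
  imports Main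
begin

definition matroid :: "'a set \<Rightarrow> ('a set \<Rightarrow> bool) \<Rightarrow> bool" where
  "matroid E indep \<longleftrightarrow>
     finite E \<and>
     (\<forall>X. indep X \<longrightarrow> X \<subseteq> E) \<and>
     indep {} \<and>
     (\<forall>X Y. indep X \<and> Y \<subseteq> X \<longrightarrow> indep Y) \<and>
     (\<forall>X Y. indep X \<and> indep Y \<and> card X < card Y \<longrightarrow>
        (\<exists>y\<in>Y - X. indep (insert y X)))"

definition circuit :: "'a set \<Rightarrow> ('a set \<Rightarrow> bool) \<Rightarrow> 'a set \<Rightarrow> bool" where
  "circuit E indep C \<longleftrightarrow> C \<subseteq> E \<and> \<not> indep C \<and> (\<forall>D. D \<subset> C \<longrightarrow> indep D)"

definition basis :: "'a set \<Rightarrow> ('a set \<Rightarrow> bool) \<Rightarrow> 'a set \<Rightarrow> bool" where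
  "basis E indep B \<longleftrightarrow> indep B \<and> (\<forall>X. indep X \<and> B \<subseteq> X \<longrightarrow> X = B)"

definition dual_indep :: "'a set \<Rightarrow> ('a set \<Rightarrow> bool) \<Rightarrow> 'a set \<Rightarrow> bool" where
  "dual_indep E indep I \<longleftrightarrow> I \<subseteq> E \<and> (\<exists>B. basis E indep B \<and> I \<inter> B = {})"

definition cocircuit :: "'a set \<Rightarrow> ('a set \<Rightarrow> bool) \<Rightarrow> 'a set \<Rightarrow> bool" where
  "cocircuit E indep C \<longleftrightarrow> circuit E (dual_indep E indep) C"

definition is_spike_partition ::
  "nat \<Rightarrow> nat \<Rightarrow> 'a set \<Rightarrow> ('a set \<Rightarrow> bool) \<Rightarrow> (nat \<Rightarrow> 'a set) \<Rightarrow> bool" where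
  "is_spike_partition t r E indep A \<longleftrightarrow>
     matroid E indep \<and> 0 < t \<and> t \<le> r \<and>
     (\<forall>i\<in>{1..r}. card (A i) = 2) \<and>
     (\<forall>i\<in>{1..r}. \<forall>j\<in>{1..r}. i \<noteq> j \<longrightarrow> A i \<inter> A j = {}) \<and>
     (\<Union>i\<in>{1..r}. A i) = E \<and>
     (\<forall>J. J \<subseteq> {1..r} \<and> card J = t \<longrightarrow>
        circuit E indep (\<Union>j\<in>J. A j) \<and> cocircuit E indep (\<Union>j\<in>J. A j))"

end

theory Submission
  imports Defs
begin

text \<open>Write \<open>A\<^sub>J\<close> for the union of the blocks indexed by \<open>J\<close>. If a circuit \<open>C\<close> contains
  some \<open>A\<^sub>J\<close> with \<open>|J| = t\<close>, then \<open>C = A\<^sub>J\<close>, because circuits are incomparable. Otherwise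
  fewer than \<open>t\<close> blocks lie inside \<open>C\<close>. If every block that meets \<open>C\<close> lies inside it,
  then \<open>C\<close> is contained in some \<open>A\<^sub>J\<close> and is again equal to it. So some block \<open>A\<^sub>k\<close> meets
  \<open>C\<close> in exactly one element. Adding \<open>t - 1\<close> blocks that avoid \<open>C\<close> to \<open>A\<^sub>k\<close> would give
  a cocircuit that meets \<open>C\<close> in a single element, which orthogonality forbids. Hence
  fewer than \<open>t - 1\<close> blocks avoid \<open>C\<close>.\<close>

lemma matroid_indep_subset_ground: "matroid E indep \<Longrightarrow> indep X \<Longrightarrow> X \<subseteq> E"
  unfolding matroid_def by simp

lemma matroid_indep_subset: "matroid E indep \<Longrightarrow> indep X \<Longrightarrow> Y \<subseteq> X \<Longrightarrow> indep Y"
  unfolding matroid_def by metis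

lemma matroid_augment:
  "matroid E indep \<Longrightarrow> indep X \<Longrightarrow> indep Y \<Longrightarrow> card X < card Y \<Longrightarrow>
    \<exists>y\<in>Y - X. indep (insert y X)"
  unfolding matroid_def by metis

lemma matroid_indep_finite: "matroid E indep \<Longrightarrow> indep X \<Longrightarrow> finite X"
  using matroid_indep_subset_ground finite_subset[of X E] unfolding matroid_def by blast

lemma matroid_augment_to_card:
  assumes M: "matroid E indep" and "indep B" "indep I" "card I \<le> card B"
  shows "\<exists>I'. indep I' \<and> I \<subseteq> I' \<and> I' \<subseteq> I \<union> B \<and> card I' = card B"
proof -
  have "indep I \<Longrightarrow> card I + n = card B \<Longrightarrow>
      \<exists>I'. indep I' \<and> I \<subseteq> I' \<and> I' \<subseteq> I \<union> B \<and> card I' = card B" for n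
  proof (induction n arbitrary: I)
    case 0
    then show ?case by auto
  next
    case (Suc n)
    then obtain y where y: "y \<in> B - I" "indep (insert y I)"
      using matroid_augment[OF M Suc.prems(1) \<open>indep B\<close>] by auto
    then have "card (insert y I) + n = card B"
      using Suc.prems matroid_indep_finite[OF M] by simp
    with Suc.IH[OF y(2)] y show ?case by blast
  qed
  with assms show ?thesis by (metis le_add_diff_inverse)
qed

lemma indep_card_le_basis:
  assumes "matroid E indep" "basis E indep B" "indep I"
  shows "card I \<le> card B"
proof (rule ccontr)
  assume "\<not> card I \<le> card B"
  moreover have "indep B" "\<And>X. indep X \<Longrightarrow> B \<subseteq> X \<Longrightarrow> X = B"
    using assms(2) unfolding basis_def by auto
  ultimately obtain y where "y \<in> I - B" "indep (insert y B)"
    using matroid_augment[OF assms(1) _ assms(3)] by (meson not_le)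
  then show False
    using \<open>\<And>X. indep X \<Longrightarrow> B \<subseteq> X \<Longrightarrow> X = B\<close> by blast
qed

lemma basis_if_card_eq_basis:
  assumes M: "matroid E indep" and B: "basis E indep B" and "indep I"
    and card_eq: "card I = card B"
  shows "basis E indep I"
  unfolding basis_def
proof (intro conjI allI impI)
  fix X assume X: "indep X \<and> I \<subseteq> X"
  then have "card X \<le> card I"
    using indep_card_le_basis[OF M B] card_eq by auto
  with X show "X = I"
    using matroid_indep_finite[OF M] by (metis card_seteq)
qed fact

text \<open>Extend \<open>C - {e}\<close> inside \<open>(C - {e}) \<union> B\<close> to a basis, where \<open>B\<close> is a basis avoiding
  \<open>D - {e}\<close>: it cannot contain \<open>e\<close>, so it avoids \<open>D\<close>, contradicting that \<open>D\<close> is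
  dependent in the dual.\<close>

lemma circuit_cocircuit_inter_ne_singleton:
  assumes M: "matroid E indep" and C: "circuit E indep C"
    and D: "cocircuit E indep D"
  shows "C \<inter> D \<noteq> {e}"
proof
  assume CD: "C \<inter> D = {e}"
  have "D - {e} \<subset> D"
    using CD by blast
  then have "dual_indep E indep (D - {e})"
    using D unfolding cocircuit_def circuit_def by blast
  then obtain B where B: "basis E indep B" "(D - {e}) \<inter> B = {}"
    unfolding dual_indep_def by blast
  have "C - {e} \<subset> C"
    using CD by blast
  then have "indep (C - {e})"
    using C unfolding circuit_def by blast
  moreover have "indep B"
    using B unfolding basis_def by blast
  ultimately obtain I where I: "indep I" "C - {e} \<subseteq> I" "I \<subseteq> (C - {e}) \<union> B"
      "card I = card B"
    using matroid_augment_to_card[OF M] indep_card_le_basis[OF M B(1)] by metis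
  show False
  proof (cases "e \<in> I")
    case True
    then have "C \<subseteq> I"
      using I(2) by blast
    then show False
      using C matroid_indep_subset[OF M I(1)] unfolding circuit_def by blast
  next
    case False
    then have "D \<inter> I = {}"
      using I(3) B(2) CD by blast
    moreover have "basis E indep I"
      using basis_if_card_eq_basis[OF M B(1) I(1,4)] .
    moreover have "D \<subseteq> E" "\<not> dual_indep E indep D"
      using D unfolding cocircuit_def circuit_def by auto
    ultimately show False
      unfolding dual_indep_def by blast
  qed
qed

lemma card_2_inter_eq_singleton:
  assumes "card X = 2" "X \<inter> Y \<noteq> {}" "\<not> X \<subseteq> Y"
  obtains e where "X \<inter> Y = {e}"
proof -
  obtain x y where "X = {x, y}" "x \<noteq> y"
    using assms(1) card_2_iff by metis
  with assms(2,3) that show thesis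
    by (cases "x \<in> Y") auto
qed

lemma circuit_eq_if_subset:
  "circuit E indep C \<Longrightarrow> circuit E indep D \<Longrightarrow> C \<subseteq> D \<Longrightarrow> C = D"
  unfolding circuit_def by blast

lemma spike_partitionD:
  assumes "is_spike_partition t r E indep A"
  shows "matroid E indep" "0 < t" "t \<le> r" "(\<Union>i\<in>{1..r}. A i) = E"
    "\<And>i. i \<in> {1..r} \<Longrightarrow> card (A i) = 2"
  using assms unfolding is_spike_partition_def by blast+

lemma spike_union_circuit:
  "is_spike_partition t r E indep A \<Longrightarrow> J \<subseteq> {1..r} \<Longrightarrow> card J = t \<Longrightarrow>
    circuit E indep (\<Union>j\<in>J. A j)"
  unfolding is_spike_partition_def by blast

lemma spike_union_cocircuit:
  "is_spike_partition t r E indep A \<Longrightarrow> J \<subseteq> {1..r} \<Longrightarrow> card J = t \<Longrightarrow>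
    cocircuit E indep (\<Union>j\<in>J. A j)"
  unfolding is_spike_partition_def by blast

lemma spike_circuit_eq_union_if_many_blocks:
  assumes S: "is_spike_partition t r E indep A" and C: "circuit E indep C"
    and many: "t \<le> card {i\<in>{1..r}. A i \<subseteq> C}"
  shows "\<exists>J. J \<subseteq> {1..r} \<and> card J = t \<and> C = (\<Union>j\<in>J. A j)"
proof -
  obtain J where J: "J \<subseteq> {i\<in>{1..r}. A i \<subseteq> C}" "card J = t"
    using obtain_subset_with_card_n[OF many] by metis
  then have "J \<subseteq> {1..r}"
    by blast
  moreover have "(\<Union>j\<in>J. A j) = C"
    using circuit_eq_if_subset[OF spike_union_circuit[OF S \<open>J \<subseteq> {1..r}\<close> J(2)] C] J(1)
    by blast
  ultimately show ?thesis
    using J(2) by blast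
qed

lemma spike_circuit_eq_union_if_blocks_closed:
  assumes S: "is_spike_partition t r E indep A" and C: "circuit E indep C"
    and closed: "\<forall>i\<in>{1..r}. A i \<inter> C \<noteq> {} \<longrightarrow> A i \<subseteq> C"
  shows "\<exists>J. J \<subseteq> {1..r} \<and> card J = t \<and> C = (\<Union>j\<in>J. A j)"
proof (cases "t \<le> card {i\<in>{1..r}. A i \<subseteq> C}")
  case True
  then show ?thesis
    using spike_circuit_eq_union_if_many_blocks[OF S C] by blast
next
  case False
  let ?F = "{i\<in>{1..r}. A i \<subseteq> C}"
  have "t \<le> r" "C \<subseteq> (\<Union>i\<in>{1..r}. A i)"
    using spike_partitionD(3,4)[OF S] C unfolding circuit_def by auto
  have "\<exists>J. ?F \<subseteq> J \<and> J \<subseteq> {1..r} \<and> card J = t"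
    using False \<open>t \<le> r\<close> by (intro exists_subset_between) auto
  then obtain J where J: "?F \<subseteq> J" "J \<subseteq> {1..r}" "card J = t"
    by blast
  have "C \<subseteq> (\<Union>j\<in>J. A j)"
  proof
    fix x assume "x \<in> C"
    then obtain i where "i \<in> {1..r}" "x \<in> A i"
      using \<open>C \<subseteq> (\<Union>i\<in>{1..r}. A i)\<close> by blast
    moreover have "A i \<subseteq> C"
      using closed \<open>i \<in> {1..r}\<close> \<open>x \<in> A i\<close> \<open>x \<in> C\<close> by blast
    ultimately have "i \<in> J"
      using J(1) by blast
    with \<open>x \<in> A i\<close> show "x \<in> (\<Union>j\<in>J. A j)"
      by blast
  qed
  then have "C = (\<Union>j\<in>J. A j)"
    using circuit_eq_if_subset[OF C spike_union_circuit[OF S J(2,3)]] by blast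
  with J show ?thesis
    by blast
qed

lemma spike_avoided_blocks_if_singleton_meet:
  assumes S: "is_spike_partition t r E indep A" and C: "circuit E indep C"
    and k: "k \<in> {1..r}" and single: "A k \<inter> C = {e}"
  shows "card {i\<in>{1..r}. A i \<inter> C = {}} + 2 \<le> t"
proof (rule ccontr)
  let ?avoid = "{i\<in>{1..r}. A i \<inter> C = {}}"
  assume "\<not> card ?avoid + 2 \<le> t"
  moreover have "k \<notin> ?avoid"
    using single by blast
  ultimately have "t \<le> card (insert k ?avoid)"
    by simp
  moreover note spike_partitionD(1,2)[OF S]
  ultimately have "\<exists>J. {k} \<subseteq> J \<and> J \<subseteq> insert k ?avoid \<and> card J = t"
    by (intro exists_subset_between) auto
  then obtain J where J: "k \<in> J" "J \<subseteq> insert k ?avoid" "card J = t"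
    by blast
  then have "C \<inter> (\<Union>j\<in>J. A j) = {e}"
    using single by blast
  moreover have "cocircuit E indep (\<Union>j\<in>J. A j)"
    using J(2) k by (intro spike_union_cocircuit[OF S _ J(3)]) blast
  ultimately show False
    using circuit_cocircuit_inter_ne_singleton[OF \<open>matroid E indep\<close> C] by blast
qed

theorem lemma6p3:
  fixes t r :: nat and E :: "'a set" and indep :: "'a set \<Rightarrow> bool"
    and A :: "nat \<Rightarrow> 'a set" and C :: "'a set"
  assumes "is_spike_partition t r E indep A"
    and "circuit E indep C"
  shows "(\<exists>J. J \<subseteq> {1..r} \<and> card J = t \<and> C = (\<Union>j\<in>J. A j)) \<or>
         (int (card {i\<in>{1..r}. A i \<inter> C \<noteq> {}}) \<ge> int r - (int t - 2) \<and>
          card {i\<in>{1..r}. A i \<subseteq> C} < t)"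
proof -
  let ?met = "{i\<in>{1..r}. A i \<inter> C \<noteq> {}}" and ?avoid = "{i\<in>{1..r}. A i \<inter> C = {}}"
  consider (many) "t \<le> card {i\<in>{1..r}. A i \<subseteq> C}"
    | (closed) "\<forall>i\<in>{1..r}. A i \<inter> C \<noteq> {} \<longrightarrow> A i \<subseteq> C"
    | (split) k where "card {i\<in>{1..r}. A i \<subseteq> C} < t" "k \<in> {1..r}" "A k \<inter> C \<noteq> {}"
        "\<not> A k \<subseteq> C"
    by (meson not_le)
  then show ?thesis
  proof cases
    case many
    show ?thesis
      by (intro disjI1 spike_circuit_eq_union_if_many_blocks[OF assms many])
  next
    case closed
    show ?thesis
      by (intro disjI1 spike_circuit_eq_union_if_blocks_closed[OF assms closed])
  next
    case split
    obtain e where "A k \<inter> C = {e}"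
      using card_2_inter_eq_singleton spike_partitionD(5)[OF assms(1)] split(2-4) by metis
    then have "card ?avoid + 2 \<le> t"
      by (rule spike_avoided_blocks_if_singleton_meet[OF assms split(2)])
    moreover have "card ?met + card ?avoid = card (?met \<union> ?avoid)"
      by (rule card_Un_disjoint[symmetric]) auto
    moreover have "?met \<union> ?avoid = {1..r}"
      by blast
    ultimately show ?thesis
      using split(1) by simp
  qed
qed

end
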